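(* Let $R$ be a ring with identity. The following are equivalent: (1) $R$ is von Neumann regular; (2) the matrix ring $\mathbb{M}_2(R)$ is SSP; (3) $\mathbb{M}_n(R)$ is SSP for some $n>1$; (4) $\mathbb{M}_n(R)$ is SSP for every $n>1$.
   Context: Rings are associative with identity. $\mathbb{M}_n(R)$ is the ring of $n\times n$ matrices over $R$. A ring $R$ is von Neumann regular if for every $a\in R$ there is $b\in R$ with $a=aba$. A ring $S$ is right SSP if the sum of any two direct summands of $S_S$ is again a direct summand of $S_S$; left SSP analogously with ${}_SS$; $S$ is SSP if it is both right and left SSP. *)

theory Defs
  imports "Jordan_Normal_Form.Matrix" "HOL-Algebra.AbelCoset"
begin

definition vN_regular :: "'a::ring_1 itself \<Rightarrow> bool" where
  "vN_regular _ \<longleftrightarrow> (\<forall>a::'a. \<exists>b. a = a * b * a)"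

definition right_ideal_of :: "('a, 'b) ring_scheme \<Rightarrow> 'a set \<Rightarrow> bool" where
  "right_ideal_of S I \<longleftrightarrow> additive_subgroup I S \<and>
     (\<forall>a\<in>I. \<forall>r\<in>carrier S. a \<otimes>\<^bsub>S\<^esub> r \<in> I)"

definition left_ideal_of :: "('a, 'b) ring_scheme \<Rightarrow> 'a set \<Rightarrow> bool" where
  "left_ideal_of S I \<longleftrightarrow> additive_subgroup I S \<and>
     (\<forall>a\<in>I. \<forall>r\<in>carrier S. r \<otimes>\<^bsub>S\<^esub> a \<in> I)"

definition right_summand :: "('a, 'b) ring_scheme \<Rightarrow> 'a set \<Rightarrow> bool" where
  "right_summand S I \<longleftrightarrow> right_ideal_of S I \<and>
     (\<exists>J. right_ideal_of S J \<and> I \<inter> J = {\<zero>\<^bsub>S\<^esub>} \<and> I <+>\<^bsub>S\<^esub> J = carrier S)"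

definition left_summand :: "('a, 'b) ring_scheme \<Rightarrow> 'a set \<Rightarrow> bool" where
  "left_summand S I \<longleftrightarrow> left_ideal_of S I \<and>
     (\<exists>J. left_ideal_of S J \<and> I \<inter> J = {\<zero>\<^bsub>S\<^esub>} \<and> I <+>\<^bsub>S\<^esub> J = carrier S)"

definition right_SSP :: "('a, 'b) ring_scheme \<Rightarrow> bool" where
  "right_SSP S \<longleftrightarrow> (\<forall>I J. right_summand S I \<and> right_summand S J \<longrightarrow>
      right_summand S (I <+>\<^bsub>S\<^esub> J))"

definition left_SSP :: "('a, 'b) ring_scheme \<Rightarrow> bool" where
  "left_SSP S \<longleftrightarrow> (\<forall>I J. left_summand S I \<and> left_summand S J \<longrightarrow>
      left_summand S (I <+>\<^bsub>S\<^esub> J))"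

definition SSP :: "('a, 'b) ring_scheme \<Rightarrow> bool" where
  "SSP S \<longleftrightarrow> right_SSP S \<and> left_SSP S"

abbreviation Mat_ring :: "'a::ring_1 itself \<Rightarrow> nat \<Rightarrow> 'a mat ring" where
  "Mat_ring ty n \<equiv> ring_mat ty n ()"

end

theory Submission
  imports Defs
begin

text \<open>
  In a regular ring every direct summand of \<open>S\<^sub>S\<close> is \<open>eS\<close> for an idempotent \<open>e\<close>, and
  \<open>eS + fS = eS + pS\<close> where \<open>p\<close> is an idempotent generator of \<open>(1 - e)fS\<close>, orthogonal to \<open>e\<close>;
  then \<open>eS + pS = gS\<close> for the idempotent \<open>g = e + p(1 - e)\<close>. Passing to the opposite ring gives
  the left-hand version. Regularity of \<open>M\<^sub>n(R)\<close> follows from regularity of matrices with a single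
  nonzero entry, by splitting off one row or column at a time and applying Goodearl's
  Lemma 1.6. Conversely, summing the summands generated by \<open>E\<^sub>0\<^sub>0\<close> and \<open>E\<^sub>0\<^sub>0 + a E\<^sub>1\<^sub>0\<close>
  yields an inner inverse of \<open>a\<close>.
\<close>

definition opposite_ring :: "('a, 'b) ring_scheme \<Rightarrow> ('a, 'b) ring_scheme" where
  "opposite_ring R = R\<lparr>mult := \<lambda>x y. y \<otimes>\<^bsub>R\<^esub> x\<rparr>"

lemma opposite_ring_simps [simp]:
  "carrier (opposite_ring R) = carrier R" "mult (opposite_ring R) x y = mult R y x"
  "add (opposite_ring R) = add R" "zero (opposite_ring R) = zero R" "one (opposite_ring R) = one R"
  by (auto simp: opposite_ring_def)

lemma add_monoid_opposite_ring [simp]: "add_monoid (opposite_ring R) = add_monoid R"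
  by (simp add: opposite_ring_def)

lemma ring_opposite_ring: assumes "ring R" shows "ring (opposite_ring R)"
proof -
  interpret ring R by fact
  show ?thesis
    by unfold_locales
      (auto simp: opposite_ring_def m_assoc l_distr r_distr Units_def a_assoc intro: a_comm,
       metis a_inv_closed l_neg r_neg)
qed

definition regular_elem :: "('a, 'b) ring_scheme \<Rightarrow> 'a \<Rightarrow> bool" where
  "regular_elem R x \<longleftrightarrow> (\<exists>y\<in>carrier R. x \<otimes>\<^bsub>R\<^esub> y \<otimes>\<^bsub>R\<^esub> x = x)"

definition regular_ring :: "('a, 'b) ring_scheme \<Rightarrow> bool" where
  "regular_ring R \<longleftrightarrow> (\<forall>x\<in>carrier R. regular_elem R x)"

lemma regular_elem_opposite_ring:
  assumes "ring R" "x \<in> carrier R"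
  shows "regular_elem (opposite_ring R) x \<longleftrightarrow> regular_elem R x"
proof -
  interpret ring R by fact
  show ?thesis unfolding regular_elem_def using assms(2) by (auto simp: m_assoc)
qed

lemma regular_ring_opposite_ring:
  "ring R \<Longrightarrow> regular_ring (opposite_ring R) \<longleftrightarrow> regular_ring R"
  unfolding regular_ring_def by (simp add: regular_elem_opposite_ring)

lemma (in ring) regular_elem_zero: "regular_elem R \<zero>"
  unfolding regular_elem_def by force

text \<open>Goodearl's Lemma 1.6: if \<open>x - xyx\<close> has an inner inverse \<open>z\<close>, then
  \<open>y + (1 - yx) z (1 - xy)\<close> is one for \<open>x\<close>.\<close>
lemma (in ring) regular_elem_if_regular_defect:
  assumes x: "x \<in> carrier R" and y: "y \<in> carrier R"
    and defect: "regular_elem R (x \<ominus> x \<otimes> y \<otimes> x)"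
  shows "regular_elem R x"
proof -
  let ?d = "x \<ominus> x \<otimes> y \<otimes> x"
  from defect obtain z where z: "z \<in> carrier R" and dzd: "?d \<otimes> z \<otimes> ?d = ?d"
    unfolding regular_elem_def by auto
  have left: "x \<otimes> (\<one> \<ominus> y \<otimes> x) = ?d" using x y
    by (simp add: r_distr minus_eq r_minus m_assoc)
  have right: "(\<one> \<ominus> x \<otimes> y) \<otimes> x = ?d" using x y
    by (simp add: l_distr minus_eq l_minus m_assoc)
  have "x \<otimes> ((\<one> \<ominus> y \<otimes> x) \<otimes> z \<otimes> (\<one> \<ominus> x \<otimes> y)) \<otimes> x
      = (x \<otimes> (\<one> \<ominus> y \<otimes> x)) \<otimes> z \<otimes> ((\<one> \<ominus> x \<otimes> y) \<otimes> x)"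
    using x y z by (simp add: m_assoc)
  also have "\<dots> = ?d" using left right dzd by simp
  finally have middle: "x \<otimes> ((\<one> \<ominus> y \<otimes> x) \<otimes> z \<otimes> (\<one> \<ominus> x \<otimes> y)) \<otimes> x = ?d" .
  have "x \<otimes> (y \<oplus> (\<one> \<ominus> y \<otimes> x) \<otimes> z \<otimes> (\<one> \<ominus> x \<otimes> y)) \<otimes> x
     = x \<otimes> y \<otimes> x \<oplus> x \<otimes> ((\<one> \<ominus> y \<otimes> x) \<otimes> z \<otimes> (\<one> \<ominus> x \<otimes> y)) \<otimes> x"
    using x y z by (simp add: r_distr l_distr)
  also have "\<dots> = x" unfolding middle using x y by (simp add: minus_eq a_ac r_neg)
  finally have "x \<otimes> (y \<oplus> (\<one> \<ominus> y \<otimes> x) \<otimes> z \<otimes> (\<one> \<ominus> x \<otimes> y)) \<otimes> x = x" .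
  moreover have "y \<oplus> (\<one> \<ominus> y \<otimes> x) \<otimes> z \<otimes> (\<one> \<ominus> x \<otimes> y) \<in> carrier R"
    using x y z by simp
  ultimately show ?thesis unfolding regular_elem_def by blast
qed

text \<open>With \<open>B = eB + fB\<close> and \<open>(eB) z (eB) = eB\<close>, the defect \<open>B - B(ze)B\<close> equals \<open>f(B - BzeB)\<close>,
  so it is fixed by \<open>f\<close> on the left and by \<open>q\<close> on the right.\<close>
lemma (in ring) regular_elem_split_left:
  assumes B: "B \<in> carrier R" and e: "e \<in> carrier R" and f: "f \<in> carrier R" and q: "q \<in> carrier R"
    and ff: "f \<otimes> f = f" and B_split: "B = e \<otimes> B \<oplus> f \<otimes> B" and Bq: "B \<otimes> q = B"
    and eB: "regular_elem R (e \<otimes> B)"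
    and rest: "\<And>X. X \<in> carrier R \<Longrightarrow> f \<otimes> X = X \<Longrightarrow> X \<otimes> q = X \<Longrightarrow> regular_elem R X"
  shows "regular_elem R B"
proof -
  from eB obtain z where z: "z \<in> carrier R" and ez: "e \<otimes> B \<otimes> z \<otimes> (e \<otimes> B) = e \<otimes> B"
    unfolding regular_elem_def by auto
  define X where "X = B \<ominus> B \<otimes> (z \<otimes> e) \<otimes> B"
  have X: "X \<in> carrier R" using B z e by (simp add: X_def)
  have "B \<otimes> (z \<otimes> e) \<otimes> B = e \<otimes> B \<otimes> z \<otimes> (e \<otimes> B) \<oplus> f \<otimes> B \<otimes> z \<otimes> (e \<otimes> B)"
    using B z e f by (subst (1) B_split) (simp add: l_distr m_assoc)
  hence X_eq: "X = f \<otimes> B \<ominus> f \<otimes> B \<otimes> z \<otimes> (e \<otimes> B)"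
    unfolding X_def ez using B z e f
    by (subst (1) B_split) (simp add: minus_eq minus_add a_assoc a_lcomm[of "e \<otimes> B"] r_neg2)
  have "f \<otimes> X = X" unfolding X_eq using B z e f ff
    by (simp add: minus_eq r_distr r_minus m_assoc[symmetric])
  moreover have "X \<otimes> q = X" unfolding X_def using B z e q Bq
    by (simp add: minus_eq l_distr l_minus m_assoc)
  ultimately have "regular_elem R X" using rest X by blast
  thus ?thesis unfolding X_def by (rule regular_elem_if_regular_defect[OF B m_closed[OF z e]])
qed

lemma (in ring) regular_elem_split_right:
  assumes B: "B \<in> carrier R" and e: "e \<in> carrier R" and f: "f \<in> carrier R" and p: "p \<in> carrier R"
    and ff: "f \<otimes> f = f" and B_split: "B = B \<otimes> e \<oplus> B \<otimes> f" and pB: "p \<otimes> B = B"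
    and Be: "regular_elem R (B \<otimes> e)"
    and rest: "\<And>X. X \<in> carrier R \<Longrightarrow> X \<otimes> f = X \<Longrightarrow> p \<otimes> X = X \<Longrightarrow> regular_elem R X"
  shows "regular_elem R B"
proof -
  interpret opp: ring "opposite_ring R" by (rule ring_opposite_ring) unfold_locales
  have "regular_elem (opposite_ring R) B"
    by (rule opp.regular_elem_split_left[of B e f p])
      (use assms in \<open>auto simp: regular_elem_opposite_ring[OF ring_axioms]\<close>)
  thus ?thesis using regular_elem_opposite_ring[OF ring_axioms B] by simp
qed

lemma set_add_iff: "x \<in> I <+>\<^bsub>R\<^esub> J \<longleftrightarrow> (\<exists>a\<in>I. \<exists>b\<in>J. x = a \<oplus>\<^bsub>R\<^esub> b)"
  by (auto simp: set_add_def')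

definition principal_right_ideal :: "('a, 'b) ring_scheme \<Rightarrow> 'a \<Rightarrow> 'a set" where
  "principal_right_ideal R a = (\<lambda>s. a \<otimes>\<^bsub>R\<^esub> s) ` carrier R"

lemma principal_right_ideal_iff:
  "x \<in> principal_right_ideal R a \<longleftrightarrow> (\<exists>s\<in>carrier R. x = a \<otimes>\<^bsub>R\<^esub> s)"
  by (auto simp: principal_right_ideal_def)

lemma principal_set_add_iff:
  "x \<in> principal_right_ideal R a <+>\<^bsub>R\<^esub> principal_right_ideal R b \<longleftrightarrow>
     (\<exists>s\<in>carrier R. \<exists>t\<in>carrier R. x = a \<otimes>\<^bsub>R\<^esub> s \<oplus>\<^bsub>R\<^esub> b \<otimes>\<^bsub>R\<^esub> t)"
  by (auto simp: set_add_iff principal_right_ideal_def)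

lemma principal_set_addI:
  "s \<in> carrier R \<Longrightarrow> t \<in> carrier R \<Longrightarrow>
     a \<otimes>\<^bsub>R\<^esub> s \<oplus>\<^bsub>R\<^esub> b \<otimes>\<^bsub>R\<^esub> t \<in> principal_right_ideal R a <+>\<^bsub>R\<^esub> principal_right_ideal R b"
  by (auto simp: principal_set_add_iff)

context ring
begin

lemma principal_right_ideal_closed:
  "a \<in> carrier R \<Longrightarrow> principal_right_ideal R a \<subseteq> carrier R"
  by (auto simp: principal_right_ideal_iff)

lemma idem_in_principal_right_ideal:
  "e \<in> carrier R \<Longrightarrow> e \<otimes> e = e \<Longrightarrow> x \<in> principal_right_ideal R e \<longleftrightarrow> x \<in> carrier R \<and> e \<otimes> x = x"
  by (auto simp: principal_right_ideal_iff m_assoc[symmetric]) metis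

lemma right_ideal_principal:
  assumes a: "a \<in> carrier R"
  shows "right_ideal_of R (principal_right_ideal R a)"
  unfolding right_ideal_of_def
proof (intro conjI ballI additive_subgroupI add.subgroupI)
  show "principal_right_ideal R a \<subseteq> carrier R" using a by (rule principal_right_ideal_closed)
  show "principal_right_ideal R a \<noteq> {}" by (auto simp: principal_right_ideal_def)
  fix x y assume "x \<in> principal_right_ideal R a" "y \<in> principal_right_ideal R a"
  then obtain s t where "s \<in> carrier R" "x = a \<otimes> s" "t \<in> carrier R" "y = a \<otimes> t"
    by (auto simp: principal_right_ideal_iff)
  thus "x \<oplus> y \<in> principal_right_ideal R a" "\<ominus> x \<in> principal_right_ideal R a"
    using a by (auto simp: principal_right_ideal_iff r_distr[symmetric] r_minus[symmetric])
next
  fix x r assume "x \<in> principal_right_ideal R a" "r \<in> carrier R"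
  thus "x \<otimes> r \<in> principal_right_ideal R a"
    using a by (auto simp: principal_right_ideal_iff m_assoc)
qed

lemma idem_complement_split:
  "e \<in> carrier R \<Longrightarrow> x \<in> carrier R \<Longrightarrow> x = e \<otimes> x \<oplus> (\<one> \<ominus> e) \<otimes> x"
  by (simp add: minus_eq l_distr l_minus a_lcomm[of "e \<otimes> x"] r_neg2 r_neg)

lemma right_summand_principal_idem:
  assumes e: "e \<in> carrier R" and ee: "e \<otimes> e = e"
  shows "right_summand R (principal_right_ideal R e)"
  unfolding right_summand_def
proof (intro conjI exI)
  let ?f = "\<one> \<ominus> e"
  have f: "?f \<in> carrier R" using e by simp
  have ff: "?f \<otimes> ?f = ?f" and ef: "e \<otimes> ?f = \<zero>"
    using e ee by (simp_all add: minus_eq l_distr r_distr l_minus r_minus r_neg)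
  show "right_ideal_of R (principal_right_ideal R e)" "right_ideal_of R (principal_right_ideal R ?f)"
    using e f by (simp_all add: right_ideal_principal)
  show "principal_right_ideal R e \<inter> principal_right_ideal R ?f = {\<zero>}"
  proof (intro equalityI subsetI)
    fix x assume "x \<in> principal_right_ideal R e \<inter> principal_right_ideal R ?f"
    hence x: "x \<in> carrier R" "e \<otimes> x = x" "?f \<otimes> x = x"
      using e ee f ff by (auto simp: idem_in_principal_right_ideal)
    hence "x = (e \<otimes> ?f) \<otimes> x" using e f by (simp add: m_assoc)
    thus "x \<in> {\<zero>}" using ef x by simp
  qed (use e f in \<open>auto simp: principal_right_ideal_iff intro!: bexI[of _ \<zero>]\<close>)
  show "principal_right_ideal R e <+>\<^bsub>R\<^esub> principal_right_ideal R ?f = carrier R"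
  proof (intro equalityI subsetI)
    fix x assume x: "x \<in> carrier R"
    show "x \<in> principal_right_ideal R e <+>\<^bsub>R\<^esub> principal_right_ideal R ?f"
      unfolding set_add_iff using idem_complement_split[OF e x] x f
      by (intro bexI[of _ "e \<otimes> x"] bexI[of _ "?f \<otimes> x"]) (auto simp: principal_right_ideal_iff)
  qed (use e f set_add_closed principal_right_ideal_closed in blast)
qed

lemma right_summand_imp_principal_idem:
  assumes I: "right_summand R I"
  obtains e where "e \<in> carrier R" "e \<otimes> e = e" "I = principal_right_ideal R e"
proof -
  from I obtain J where I_ideal: "right_ideal_of R I" and J_ideal: "right_ideal_of R J"
    and IJ: "I \<inter> J = {\<zero>}" and sum: "I <+>\<^bsub>R\<^esub> J = carrier R" unfolding right_summand_def by auto
  interpret I: additive_subgroup I R using I_ideal unfolding right_ideal_of_def by auto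
  interpret J: additive_subgroup J R using J_ideal unfolding right_ideal_of_def by auto
  obtain e k where e: "e \<in> I" and k: "k \<in> J" and one: "\<one> = e \<oplus> k"
    using sum one_closed by (metis set_add_iff)
  have ec: "e \<in> carrier R" and kc: "k \<in> carrier R" using e k I.a_subset J.a_subset by auto
  have e_unit_on_I: "e \<otimes> x = x" if x: "x \<in> I" for x
  proof -
    have xc: "x \<in> carrier R" using x I.a_subset by auto
    have kx_J: "k \<otimes> x \<in> J" using J_ideal k xc unfolding right_ideal_of_def by auto
    have ex_I: "e \<otimes> x \<in> I" using I_ideal e xc unfolding right_ideal_of_def by auto
    have x_split: "x = e \<otimes> x \<oplus> k \<otimes> x" using xc ec kc by (metis one l_distr l_one)
    have "x \<ominus> e \<otimes> x = (e \<otimes> x \<oplus> k \<otimes> x) \<ominus> e \<otimes> x" using x_split by simp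
    also have "\<dots> = k \<otimes> x" using xc ec kc by (simp add: minus_eq a_assoc a_comm[of "e \<otimes> x"] r_neg)
    finally have "k \<otimes> x \<in> I" using x ex_I by (metis minus_eq I.a_closed I.a_inv_closed)
    hence "k \<otimes> x = \<zero>" using kx_J IJ by auto
    thus ?thesis using x_split xc ec by simp
  qed
  have "I = principal_right_ideal R e"
  proof (intro equalityI subsetI)
    fix x assume x: "x \<in> I"
    thus "x \<in> principal_right_ideal R e"
      using e_unit_on_I[OF x] I.a_subset by (force simp: principal_right_ideal_iff)
  next
    fix x assume "x \<in> principal_right_ideal R e"
    thus "x \<in> I" using I_ideal e unfolding right_ideal_of_def principal_right_ideal_iff by auto
  qed
  thus thesis using that ec e_unit_on_I[OF e] by blast
qed

lemma principal_sum_eq_complement: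
  assumes e: "e \<in> carrier R" and f: "f \<in> carrier R"
  shows "principal_right_ideal R e <+>\<^bsub>R\<^esub> principal_right_ideal R f
       = principal_right_ideal R e <+>\<^bsub>R\<^esub> principal_right_ideal R ((\<one> \<ominus> e) \<otimes> f)"
proof (intro equalityI subsetI)
  let ?u = "\<one> \<ominus> e"
  have u: "?u \<in> carrier R" using e by simp
  fix x
  assume "x \<in> principal_right_ideal R e <+>\<^bsub>R\<^esub> principal_right_ideal R f"
  then obtain s t where s: "s \<in> carrier R" and t: "t \<in> carrier R" and x: "x = e \<otimes> s \<oplus> f \<otimes> t"
    by (auto simp: principal_set_add_iff)
  have "x = e \<otimes> s \<oplus> (e \<otimes> (f \<otimes> t) \<oplus> ?u \<otimes> (f \<otimes> t))"
    using x idem_complement_split[OF e, of "f \<otimes> t"] f t by simp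
  also have "\<dots> = e \<otimes> (s \<oplus> f \<otimes> t) \<oplus> ?u \<otimes> f \<otimes> t"
    using e f u s t by (simp add: r_distr a_assoc m_assoc)
  finally show "x \<in> principal_right_ideal R e <+>\<^bsub>R\<^esub> principal_right_ideal R (?u \<otimes> f)"
    using s t f by (simp add: principal_set_addI)
next
  let ?u = "\<one> \<ominus> e"
  fix x
  assume "x \<in> principal_right_ideal R e <+>\<^bsub>R\<^esub> principal_right_ideal R (?u \<otimes> f)"
  then obtain s t where s: "s \<in> carrier R" and t: "t \<in> carrier R" and x: "x = e \<otimes> s \<oplus> ?u \<otimes> f \<otimes> t"
    by (auto simp: principal_set_add_iff)
  have "?u \<otimes> f \<otimes> t = f \<otimes> t \<ominus> e \<otimes> (f \<otimes> t)"
    using e f t by (simp add: minus_eq l_distr l_minus m_assoc a_comm)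
  hence "x = e \<otimes> (s \<ominus> f \<otimes> t) \<oplus> f \<otimes> t"
    using x e f s t by (simp add: minus_eq r_distr r_minus a_ac)
  thus "x \<in> principal_right_ideal R e <+>\<^bsub>R\<^esub> principal_right_ideal R f"
    using s t f by (simp add: principal_set_addI)
qed

lemma principal_right_ideal_inner_inverse:
  assumes h: "h \<in> carrier R" and w: "w \<in> carrier R" and hwh: "h \<otimes> w \<otimes> h = h"
  shows "principal_right_ideal R h = principal_right_ideal R (h \<otimes> w)"
proof (intro equalityI subsetI)
  fix x assume "x \<in> principal_right_ideal R h"
  then obtain s where s: "s \<in> carrier R" and x: "x = h \<otimes> s" by (auto simp: principal_right_ideal_iff)
  hence "x = h \<otimes> w \<otimes> (h \<otimes> s)" using hwh h w by (simp add: m_assoc[symmetric])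
  thus "x \<in> principal_right_ideal R (h \<otimes> w)" using h s by (auto simp: principal_right_ideal_iff)
qed (use h w in \<open>auto simp: principal_right_ideal_iff m_assoc\<close>)

text \<open>\<open>ge = e\<close> and \<open>gp = p\<close> give \<open>eS + pS \<subseteq> gS\<close>; \<open>gs = es + p((1 - e)s)\<close> gives the converse.\<close>
lemma principal_sum_orthogonal_idem:
  assumes e: "e \<in> carrier R" and ee: "e \<otimes> e = e" and p: "p \<in> carrier R" and pp: "p \<otimes> p = p"
    and ep: "e \<otimes> p = \<zero>"
  defines "g \<equiv> e \<oplus> p \<otimes> (\<one> \<ominus> e)"
  shows "g \<in> carrier R" "g \<otimes> g = g"
    "principal_right_ideal R e <+>\<^bsub>R\<^esub> principal_right_ideal R p = principal_right_ideal R g"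
proof -
  let ?q = "p \<otimes> (\<one> \<ominus> e)"
  have q: "?q \<in> carrier R" using e p by simp
  have ue: "(\<one> \<ominus> e) \<otimes> e = \<zero>" and up: "(\<one> \<ominus> e) \<otimes> p = p"
    using e p ee ep by (simp_all add: minus_eq l_distr l_minus r_neg)
  have qe: "?q \<otimes> e = \<zero>" using e p ue by (simp add: m_assoc)
  have eq: "e \<otimes> ?q = \<zero>" using e p ep by (simp add: m_assoc[symmetric])
  have qp: "?q \<otimes> p = p" using e p up pp by (simp add: m_assoc)
  have qq: "?q \<otimes> ?q = ?q" using e p qp by (simp add: m_assoc[symmetric])
  show g: "g \<in> carrier R" using e q by (simp add: g_def)
  have ge: "g \<otimes> e = e" using e q by (simp add: g_def l_distr ee qe)
  have gp: "g \<otimes> p = p" using e q p by (simp add: g_def l_distr ep qp)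
  show "g \<otimes> g = g" using e q by (simp add: g_def l_distr r_distr ee qe eq qq)
  show "principal_right_ideal R e <+>\<^bsub>R\<^esub> principal_right_ideal R p = principal_right_ideal R g"
  proof (intro equalityI subsetI)
    fix x assume "x \<in> principal_right_ideal R e <+>\<^bsub>R\<^esub> principal_right_ideal R p"
    then obtain s t where s: "s \<in> carrier R" and t: "t \<in> carrier R" and x: "x = e \<otimes> s \<oplus> p \<otimes> t"
      by (auto simp: principal_set_add_iff)
    have "x = g \<otimes> (e \<otimes> s \<oplus> p \<otimes> t)"
      using x e p g s t by (simp add: r_distr m_assoc[symmetric] ge gp)
    thus "x \<in> principal_right_ideal R g" using e p s t by (auto simp: principal_right_ideal_iff)
  next
    fix x assume "x \<in> principal_right_ideal R g"
    then obtain s where s: "s \<in> carrier R" and x: "x = g \<otimes> s" by (auto simp: principal_right_ideal_iff)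
    hence "x = e \<otimes> s \<oplus> p \<otimes> ((\<one> \<ominus> e) \<otimes> s)" using e p by (simp add: g_def l_distr m_assoc)
    thus "x \<in> principal_right_ideal R e <+>\<^bsub>R\<^esub> principal_right_ideal R p"
      using e s by (simp add: principal_set_addI)
  qed
qed

lemma regular_principal_sum_idem:
  assumes reg: "regular_ring R" and e: "e \<in> carrier R" and ee: "e \<otimes> e = e" and f: "f \<in> carrier R"
  obtains g where "g \<in> carrier R" "g \<otimes> g = g"
    "principal_right_ideal R e <+>\<^bsub>R\<^esub> principal_right_ideal R f = principal_right_ideal R g"
proof -
  let ?h = "(\<one> \<ominus> e) \<otimes> f"
  have h: "?h \<in> carrier R" using e f by simp
  then obtain w where w: "w \<in> carrier R" and hwh: "?h \<otimes> w \<otimes> ?h = ?h"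
    using reg unfolding regular_ring_def regular_elem_def by auto
  let ?p = "?h \<otimes> w"
  have p: "?p \<in> carrier R" using h w by simp
  have pp: "?p \<otimes> ?p = ?p" using h w hwh by (simp add: m_assoc[symmetric])
  have "e \<otimes> (\<one> \<ominus> e) = \<zero>" using e ee by (simp add: minus_eq r_distr r_minus r_neg)
  hence ep: "e \<otimes> ?p = \<zero>" using e f w by (simp add: m_assoc[symmetric])
  have "principal_right_ideal R e <+>\<^bsub>R\<^esub> principal_right_ideal R f
      = principal_right_ideal R e <+>\<^bsub>R\<^esub> principal_right_ideal R ?p"
    using principal_sum_eq_complement[OF e f] principal_right_ideal_inner_inverse[OF h w hwh] by simp
  thus thesis using that principal_sum_orthogonal_idem[OF e ee p pp ep] by simp
qed

lemma regular_imp_right_SSP: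
  assumes reg: "regular_ring R"
  shows "right_SSP R"
  unfolding right_SSP_def
proof (intro allI impI)
  fix I J assume "right_summand R I \<and> right_summand R J"
  then obtain e f where e: "e \<in> carrier R" "e \<otimes> e = e" "I = principal_right_ideal R e"
    and f: "f \<in> carrier R" "J = principal_right_ideal R f"
    by (meson right_summand_imp_principal_idem)
  obtain g where "g \<in> carrier R" "g \<otimes> g = g" "I <+>\<^bsub>R\<^esub> J = principal_right_ideal R g"
    using regular_principal_sum_idem[OF reg e(1,2) f(1)] e(3) f(2) by metis
  thus "right_summand R (I <+>\<^bsub>R\<^esub> J)" by (simp add: right_summand_principal_idem)
qed

end

lemma left_SSP_eq_right_SSP_opposite: "left_SSP R \<longleftrightarrow> right_SSP (opposite_ring R)"
  unfolding left_SSP_def right_SSP_def left_summand_def right_summand_def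
    left_ideal_of_def right_ideal_of_def additive_subgroup_def set_add_def
  by simp

lemma regular_imp_SSP: "ring R \<Longrightarrow> regular_ring R \<Longrightarrow> SSP R"
  unfolding SSP_def left_SSP_eq_right_SSP_opposite
  by (simp add: ring.regular_imp_right_SSP ring_opposite_ring regular_ring_opposite_ring)

lemma ring_Mat_ring: "ring (Mat_ring (ty :: 'a :: ring_1 itself) n)"
  by (unfold_locales, insert add_inv_exists_mat, auto simp: ring_mat_def algebra_simps Units_def)

lemma regular_elem_Mat_ring_iff:
  "regular_elem (Mat_ring (ty :: 'a :: ring_1 itself) n) A \<longleftrightarrow> (\<exists>Y\<in>carrier_mat n n. A * Y * A = A)"
  by (simp add: regular_elem_def ring_mat_simps)

definition diag_proj :: "nat \<Rightarrow> nat set \<Rightarrow> 'a :: ring_1 mat" where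
  "diag_proj n I = mat n n (\<lambda>(i, j). if i = j \<and> i \<in> I then 1 else 0)"

lemma diag_proj_carrier [simp]: "diag_proj n I \<in> carrier_mat n n"
  by (simp add: diag_proj_def)

lemma diag_proj_dims [simp]: "dim_row (diag_proj n I) = n" "dim_col (diag_proj n I) = n"
  by (simp_all add: diag_proj_def)

lemma sum_if_eq_left:
  "j < (n :: nat) \<Longrightarrow> (\<Sum>k = 0..<n. if k = j \<and> P k then (c :: 'a :: comm_monoid_add) else 0) = (if P j then c else 0)"
proof -
  assume j: "j < n"
  have "(\<Sum>k = 0..<n. if k = j \<and> P k then c else 0) = (\<Sum>k = 0..<n. if k = j then (if P j then c else 0) else 0)"
    by (rule sum.cong) auto
  thus ?thesis using j by simp
qed

lemma sum_if_eq_right: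
  "j < (n :: nat) \<Longrightarrow> (\<Sum>k = 0..<n. if j = k \<and> P k then (c :: 'a :: comm_monoid_add) else 0) = (if P j then c else 0)"
  using sum_if_eq_left[of j n P c] by (simp add: eq_commute[of j])

lemma diag_proj_mult_left:
  assumes "A \<in> carrier_mat n m" "i < n" "j < m"
  shows "(diag_proj n I * A) $$ (i, j) = (if i \<in> I then A $$ (i, j) else 0)"
  using assms by (simp add: diag_proj_def scalar_prod_def row_def col_def if_distrib[of "\<lambda>x. x * _"]
      sum_if_eq_left sum_if_eq_right cong: if_cong)

lemma diag_proj_mult_right:
  assumes "A \<in> carrier_mat m n" "i < m" "j < n"
  shows "(A * diag_proj n J) $$ (i, j) = (if j \<in> J then A $$ (i, j) else 0)"
  using assms by (simp add: diag_proj_def scalar_prod_def row_def col_def if_distrib[of "\<lambda>x. _ * x"]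
      sum_if_eq_left sum_if_eq_right cong: if_cong)

lemma diag_proj_mult: "diag_proj n I * diag_proj n J = (diag_proj n (I \<inter> J) :: 'a :: ring_1 mat)"
proof (rule eq_matI)
  fix i j assume "i < dim_row (diag_proj n (I \<inter> J) :: 'a mat)" "j < dim_col (diag_proj n (I \<inter> J) :: 'a mat)"
  hence ij: "i < n" "j < n" by auto
  show "(diag_proj n I * diag_proj n J) $$ (i, j) = (diag_proj n (I \<inter> J) :: 'a mat) $$ (i, j)"
    by (subst diag_proj_mult_left[OF diag_proj_carrier ij]) (use ij in \<open>auto simp: diag_proj_def\<close>)
qed auto

lemma diag_proj_idem [simp]: "diag_proj n I * diag_proj n I = (diag_proj n I :: 'a :: ring_1 mat)"
  by (simp add: diag_proj_mult)

lemma diag_proj_insert: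
  "j \<notin> J \<Longrightarrow> diag_proj n (insert j J) = diag_proj n {j} + (diag_proj n J :: 'a :: ring_1 mat)"
  by (rule eq_matI) (auto simp: diag_proj_def)

lemma diag_proj_empty: "diag_proj n {} = (0\<^sub>m n n :: 'a :: ring_1 mat)"
  by (rule eq_matI) (auto simp: diag_proj_def)

lemma diag_proj_lessThan: "diag_proj n {..<n} = (1\<^sub>m n :: 'a :: ring_1 mat)"
  by (rule eq_matI) (auto simp: diag_proj_def)

lemma diag_proj_out_of_range: "n \<le> i \<Longrightarrow> diag_proj n {i} = (0\<^sub>m n n :: 'a :: ring_1 mat)"
  by (rule eq_matI) (auto simp: diag_proj_def)

lemma regular_elem_Mat_ring_single_entry:
  fixes ty :: "'a :: ring_1 itself"
  assumes reg: "vN_regular ty" and A: "A \<in> carrier_mat n n"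
    and row: "diag_proj n {i} * A = A" and col: "A * diag_proj n {j} = A"
  shows "regular_elem (Mat_ring ty n) A"
  unfolding regular_elem_Mat_ring_iff
proof (cases "i < n \<and> j < n")
  case False
  hence "A = 0\<^sub>m n n" using row col A by (auto simp: diag_proj_out_of_range)
  thus "\<exists>Y\<in>carrier_mat n n. A * Y * A = A" by (intro bexI[of _ "0\<^sub>m n n"]) auto
next
  case True
  hence ij: "i < n" "j < n" by auto
  define \<alpha> where "\<alpha> = A $$ (i, j)"
  obtain r where r: "\<alpha> = \<alpha> * r * \<alpha>" using reg unfolding vN_regular_def by blast
  have A_entry: "A $$ (p, q) = (if p = i \<and> q = j then \<alpha> else 0)" if "p < n" "q < n" for p q
  proof -
    have "A $$ (p, q) = (diag_proj n {i} * A * diag_proj n {j}) $$ (p, q)" using row col by simp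
    also have "\<dots> = (if q = j then (diag_proj n {i} * A) $$ (p, q) else 0)"
      using that A by (subst diag_proj_mult_right) auto
    also have "\<dots> = (if p = i \<and> q = j then \<alpha> else 0)"
      using that A by (subst diag_proj_mult_left[OF A]) (auto simp: \<alpha>_def)
    finally show ?thesis .
  qed
  have A_eq: "A = mat n n (\<lambda>(p, q). if p = i \<and> q = j then \<alpha> else 0)"
    using A A_entry by (intro eq_matI) auto
  define Y where "Y = mat n n (\<lambda>(p, q). if p = j \<and> q = i then r else (0 :: 'a))"
  have AY: "A * Y = mat n n (\<lambda>(p, q). if p = i \<and> q = i then \<alpha> * r else 0)"
    unfolding A_eq Y_def using ij
    by (intro eq_matI) (auto simp: scalar_prod_def row_def col_def if_distrib[of "\<lambda>x. x * _"]
        if_distrib[of "\<lambda>x. _ * x"] sum_if_eq_left sum_if_eq_right cong: if_cong)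
  have "A * Y * A = mat n n (\<lambda>(p, q). if p = i \<and> q = j then \<alpha> * r * \<alpha> else 0)"
    unfolding AY using ij by (subst (1) A_eq, intro eq_matI)
      (auto simp: scalar_prod_def row_def col_def if_distrib[of "\<lambda>x. x * _"]
        if_distrib[of "\<lambda>x. _ * x"] sum_if_eq_left sum_if_eq_right cong: if_cong)
  also have "\<dots> = A" by (subst A_eq) (simp only: r[symmetric])
  finally show "\<exists>Y\<in>carrier_mat n n. A * Y * A = A" by (intro bexI[of _ Y]) (auto simp: Y_def)
qed

lemma regular_elem_Mat_ring_single_row:
  fixes ty :: "'a :: ring_1 itself"
  assumes reg: "vN_regular ty" and J: "finite J"
  shows "A \<in> carrier_mat n n \<Longrightarrow> diag_proj n {i} * A = A \<Longrightarrow> A * diag_proj n J = A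
    \<Longrightarrow> regular_elem (Mat_ring ty n) A"
  using J
proof (induction J arbitrary: A rule: finite_induct)
  case empty
  interpret M: ring "Mat_ring ty n" by (rule ring_Mat_ring)
  have "A = 0\<^sub>m n n" using empty.prems by (simp add: diag_proj_empty)
  thus ?case using M.regular_elem_zero by (simp add: ring_mat_simps)
next
  case (insert j J)
  interpret M: ring "Mat_ring ty n" by (rule ring_Mat_ring)
  let ?P = "diag_proj n :: nat set \<Rightarrow> 'a mat"
  have A: "A \<in> carrier_mat n n" and row: "?P {i} * A = A" using insert.prems by auto
  have "A = A * (?P {j} + ?P J)"
    using insert.prems(3)[unfolded diag_proj_insert[OF insert.hyps(2)]] by (rule sym)
  also have "\<dots> = A * ?P {j} + A * ?P J" by (rule mult_add_distrib_mat[OF A]) auto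
  finally have split: "A = A * ?P {j} + A * ?P J" .
  have "?P {i} * (A * ?P {j}) = A * ?P {j}"
    using A row by (simp flip: assoc_mult_mat[of "?P {i}" n n A n "?P {j}" n])
  moreover have "A * ?P {j} * ?P {j} = A * ?P {j}"
    using A by (simp add: assoc_mult_mat[of A n n "?P {j}" n "?P {j}" n])
  ultimately have "regular_elem (Mat_ring ty n) (A * ?P {j})"
    using A by (intro regular_elem_Mat_ring_single_entry[OF reg]) auto
  thus ?case
    by (intro M.regular_elem_split_right[of A "?P {j}" "?P J" "?P {i}"])
      (use A row split insert.IH in \<open>auto simp: ring_mat_simps\<close>)
qed

lemma regular_elem_Mat_ring_supported:
  fixes ty :: "'a :: ring_1 itself"
  assumes reg: "vN_regular ty" and I: "finite I" and J: "finite J"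
  shows "A \<in> carrier_mat n n \<Longrightarrow> diag_proj n I * A = A \<Longrightarrow> A * diag_proj n J = A
    \<Longrightarrow> regular_elem (Mat_ring ty n) A"
  using I
proof (induction I arbitrary: A rule: finite_induct)
  case empty
  interpret M: ring "Mat_ring ty n" by (rule ring_Mat_ring)
  have "A = 0\<^sub>m n n" using empty.prems by (simp add: diag_proj_empty)
  thus ?case using M.regular_elem_zero by (simp add: ring_mat_simps)
next
  case (insert i I)
  interpret M: ring "Mat_ring ty n" by (rule ring_Mat_ring)
  let ?P = "diag_proj n :: nat set \<Rightarrow> 'a mat"
  have A: "A \<in> carrier_mat n n" and col: "A * ?P J = A" using insert.prems by auto
  have "A = (?P {i} + ?P I) * A"
    using insert.prems(2)[unfolded diag_proj_insert[OF insert.hyps(2)]] by (rule sym)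
  also have "\<dots> = ?P {i} * A + ?P I * A" by (rule add_mult_distrib_mat[OF _ _ A]) auto
  finally have split: "A = ?P {i} * A + ?P I * A" .
  have "?P {i} * (?P {i} * A) = ?P {i} * A"
    using A by (simp flip: assoc_mult_mat[of "?P {i}" n n "?P {i}" n A n])
  moreover have "?P {i} * A * ?P J = ?P {i} * A"
    using A col by (simp add: assoc_mult_mat[of "?P {i}" n n A n "?P J" n])
  ultimately have "regular_elem (Mat_ring ty n) (?P {i} * A)"
    using A by (intro regular_elem_Mat_ring_single_row[OF reg J]) auto
  thus ?case
    by (intro M.regular_elem_split_left[of A "?P {i}" "?P I" "?P J"])
      (use A col split insert.IH in \<open>auto simp: ring_mat_simps\<close>)
qed

lemma regular_ring_Mat_ring:
  fixes ty :: "'a :: ring_1 itself"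
  assumes "vN_regular ty"
  shows "regular_ring (Mat_ring ty n)"
  unfolding regular_ring_def ring_mat_simps
  using regular_elem_Mat_ring_supported[OF assms, of "{..<n}" "{..<n}"] by (simp add: diag_proj_lessThan)

text \<open>With \<open>e = E\<^sub>0\<^sub>0\<close> and \<open>f = E\<^sub>0\<^sub>0 + a E\<^sub>1\<^sub>0\<close>, the sum \<open>eS + fS\<close> contains \<open>D = a E\<^sub>1\<^sub>0\<close>.
  If it equals \<open>gS\<close> for an idempotent \<open>g\<close>, then \<open>gD = D\<close> gives \<open>a = g\<^sub>1\<^sub>1 a\<close>,
  while \<open>g \<in> eS + fS\<close> forces \<open>g\<^sub>1\<^sub>1 \<in> aR\<close>.\<close>
lemma right_SSP_Mat_ring_imp_vN_regular:
  fixes ty :: "'a :: ring_1 itself"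
  assumes n: "1 < n" and SSP: "right_SSP (Mat_ring ty n)"
  shows "vN_regular ty"
  unfolding vN_regular_def
proof
  fix a :: 'a
  interpret M: ring "Mat_ring ty n" by (rule ring_Mat_ring)
  let ?I = "principal_right_ideal (Mat_ring ty n)"
  define c where "c = (\<lambda>p :: nat. if p = 0 then 1 else if p = 1 then a else 0)"
  define e where "e = (diag_proj n {0} :: 'a mat)"
  define f where "f = mat n n (\<lambda>(p, q). if q = 0 then c p else 0)"
  have e: "e \<in> carrier_mat n n" and f: "f \<in> carrier_mat n n" by (auto simp: e_def f_def)
  have ee: "e * e = e" by (simp add: e_def)
  have ff: "f * f = f" unfolding f_def
    by (intro eq_matI) (auto simp: scalar_prod_def row_def col_def if_distrib[of "\<lambda>x. x * _"] c_def cong: if_cong)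
  have "right_summand (Mat_ring ty n) (?I e)" "right_summand (Mat_ring ty n) (?I f)"
    using M.right_summand_principal_idem e ee f ff by (simp_all add: ring_mat_simps)
  hence "right_summand (Mat_ring ty n) (?I e <+>\<^bsub>Mat_ring ty n\<^esub> ?I f)"
    using SSP unfolding right_SSP_def by blast
  then obtain g where g: "g \<in> carrier_mat n n" and gg: "g * g = g"
    and sum_eq: "?I e <+>\<^bsub>Mat_ring ty n\<^esub> ?I f = ?I g"
    by (auto elim: M.right_summand_imp_principal_idem simp: ring_mat_simps)
  have "g \<in> ?I g" using g gg by (simp add: M.idem_in_principal_right_ideal ring_mat_simps)
  then obtain s1 s2 where s1: "s1 \<in> carrier_mat n n" and s2: "s2 \<in> carrier_mat n n"
    and g_eq: "g = e * s1 + f * s2"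
    unfolding sum_eq[symmetric] principal_set_add_iff by (auto simp: ring_mat_simps)
  define D where "D = mat n n (\<lambda>(p, q). if p = 1 \<and> q = 0 then a else (0 :: 'a))"
  have "D = e * (- 1\<^sub>m n) + f * 1\<^sub>m n"
    using n e f by (intro eq_matI) (auto simp: D_def e_def f_def c_def diag_proj_def)
  hence "D \<in> ?I g" unfolding sum_eq[symmetric]
    using principal_set_addI[where R = "Mat_ring ty n" and s = "- 1\<^sub>m n" and t = "1\<^sub>m n"]
    by (simp add: ring_mat_simps)
  hence gD: "g * D = D" using g gg by (simp add: M.idem_in_principal_right_ideal ring_mat_simps)
  have "(g * D) $$ (1, 0) = g $$ (1, 1) * a"
    using n g by (simp add: D_def scalar_prod_def row_def col_def if_distrib[of "\<lambda>x. _ * x"] cong: if_cong)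
  hence a_eq: "a = g $$ (1, 1) * a" using gD n by (simp add: D_def)
  have "(e * s1) $$ (1, 1) = 0" unfolding e_def using n s1 by (subst diag_proj_mult_left) auto
  moreover have "(f * s2) $$ (1, 1) = a * s2 $$ (0, 1)"
    using n s2 by (simp add: f_def c_def scalar_prod_def row_def col_def if_distrib[of "\<lambda>x. x * _"] cong: if_cong)
  ultimately have "g $$ (1, 1) = a * s2 $$ (0, 1)" unfolding g_eq using n e f s1 s2 by simp
  thus "\<exists>b. a = a * b * a" using a_eq by auto
qed

lemma SSP_Mat_ring_iff_vN_regular:
  fixes ty :: "'a :: ring_1 itself"
  assumes "1 < n"
  shows "SSP (Mat_ring ty n) \<longleftrightarrow> vN_regular ty"
  using regular_imp_SSP[OF ring_Mat_ring regular_ring_Mat_ring]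
    right_SSP_Mat_ring_imp_vN_regular[OF assms] unfolding SSP_def by blast

theorem theorem2p14:
  fixes ty :: "'a::ring_1 itself"
  shows "(vN_regular ty \<longleftrightarrow> SSP (Mat_ring ty 2))
       \<and> (SSP (Mat_ring ty 2) \<longleftrightarrow> (\<exists>n>1. SSP (Mat_ring ty n)))
       \<and> ((\<exists>n>1. SSP (Mat_ring ty n)) \<longleftrightarrow> (\<forall>n>1. SSP (Mat_ring ty n)))"
  using SSP_Mat_ring_iff_vN_regular[of 2 ty] SSP_Mat_ring_iff_vN_regular[of _ ty] by auto

end
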